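(* Let $f\in\mathbb R[x_1,\dots,x_n]$ be a circuit polynomial $f(x)=\sum_{j=0}^r f_{\alpha(j)}x^{\alpha(j)}+f_{\alpha^\star}x^{\alpha^\star}$ satisfying condition (C3). Then $r\in\{n-1,n\}$. If $r=n$, then $f$ is gem regular (i.e. $D(f)=\emptyset$). If $r=n-1$, then $f$ is gem irregular with $D(f)=\{\alpha^\star\}$, and $\{\alpha(0),\dots,\alpha(n-1)\}=\{2k_1e_1,\dots,2k_ne_n\}$ for some $k_i\in\mathbb N$.
   Context: A circuit polynomial is $f(x)=\sum_{j=0}^r f_{\alpha(j)}x^{\alpha(j)}+f_{\alpha^\star}x^{\alpha^\star}$ (with $f_{\alpha^\star}\ne0$) such that: $r\le n$; $\alpha(j)\in 2\mathbb N_0^n$ and $f_{\alpha(j)}>0$ for all $j$; the vertex set of the Newton polytope $\mathrm{conv}(A(f))$ is exactly $\{\alpha(0),\dots,\alpha(r)\}$ and these points are affinely independent; and $\alpha^\star=\sum_{j=0}^r\lambda_j\alpha(j)$ uniquely with all $\lambda_j>0$, $\sum_j\lambda_j=1$. Here $A(f)$ is the set of exponents with nonzero coefficient. $\mathrm{New}_\infty(f)=\mathrm{conv}(A(f)\cup\{0\})$, $V_0(f)$ is its vertex set, $V(f)=V_0(f)\setminus\{0\}$, $V^c(f)=A(f)\setminus V(f)$. Condition (C3): for every $i\in\{1,\dots,n\}$, $V(f)$ contains a vector $2k_ie_i$ with $k_i\in\mathbb N$. Let $\mathcal G(f)$ be the set of nonempty faces $G$ of $\mathrm{New}_\infty(f)$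 with $0\notin G$. An exponent $\alpha\in A(f)$ is gem degenerate if $\alpha\in V^c(f)\cap G$ for some $G\in\mathcal G(f)$; $D(f)$ is the set of gem degenerate exponents; $f$ is gem regular if $D(f)=\emptyset$ and gem irregular otherwise. *)

theory Defs
  imports "HOL-Analysis.Analysis"
begin

text \<open>A real polynomial in n variables (n = CARD('n)) is represented by its
coefficient function on exponent vectors in N_0^n (finite support).
Exponents are embedded into \<real>^n by \<open>rv\<close>.\<close>

definition rv :: "nat ^ 'n \<Rightarrow> real ^ 'n" where
  "rv \<alpha> = (\<chi> i. real (\<alpha> $ i))"

definition supp_A :: "(nat ^ 'n \<Rightarrow> real) \<Rightarrow> (nat ^ 'n) set" where
  "supp_A f = {\<alpha>. f \<alpha> \<noteq> 0}"

definition vertices :: "(real ^ 'n) set \<Rightarrow> (real ^ 'n) set" where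
  "vertices P = {x. x extreme_point_of P}"

definition New_inf :: "(nat ^ 'n \<Rightarrow> real) \<Rightarrow> (real ^ 'n) set" where
  "New_inf f = convex hull (rv ` supp_A f \<union> {0})"

definition V0 :: "(nat ^ 'n \<Rightarrow> real) \<Rightarrow> (real ^ 'n) set" where
  "V0 f = vertices (New_inf f)"

definition Vf :: "(nat ^ 'n \<Rightarrow> real) \<Rightarrow> (real ^ 'n) set" where
  "Vf f = V0 f - {0}"

definition Vc :: "(nat ^ 'n \<Rightarrow> real) \<Rightarrow> (nat ^ 'n) set" where
  "Vc f = {\<alpha> \<in> supp_A f. rv \<alpha> \<notin> Vf f}"

definition GG :: "(nat ^ 'n \<Rightarrow> real) \<Rightarrow> (real ^ 'n) set set" where
  "GG f = {G. G face_of New_inf f \<and> G \<noteq> {} \<and> 0 \<notin> G}"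

definition gem_degenerate_set :: "(nat ^ 'n \<Rightarrow> real) \<Rightarrow> (nat ^ 'n) set" where
  "gem_degenerate_set f = {\<alpha> \<in> supp_A f. \<alpha> \<in> Vc f \<and> (\<exists>G\<in>GG f. rv \<alpha> \<in> G)}"

definition gem_regular :: "(nat ^ 'n \<Rightarrow> real) \<Rightarrow> bool" where
  "gem_regular f \<longleftrightarrow> gem_degenerate_set f = {}"

definition C3 :: "(nat ^ 'n \<Rightarrow> real) \<Rightarrow> bool" where
  "C3 f \<longleftrightarrow> (\<forall>i. \<exists>k::nat. k \<ge> 1 \<and> rv (axis i (2 * k)) \<in> Vf f)"

definition circuit_poly ::
  "(nat ^ 'n \<Rightarrow> real) \<Rightarrow> nat \<Rightarrow> (nat \<Rightarrow> nat ^ 'n) \<Rightarrow> nat ^ 'n \<Rightarrow> bool" where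
  "circuit_poly f r \<alpha> \<alpha>s \<longleftrightarrow>
     r \<le> CARD('n) \<and>
     inj_on \<alpha> {0..r} \<and> \<alpha>s \<notin> \<alpha> ` {0..r} \<and>
     supp_A f = \<alpha> ` {0..r} \<union> {\<alpha>s} \<and>
     (\<forall>j\<in>{0..r}. (\<forall>i. even (\<alpha> j $ i)) \<and> f (\<alpha> j) > 0) \<and>
     f \<alpha>s \<noteq> 0 \<and>
     vertices (convex hull (rv ` supp_A f)) = rv ` \<alpha> ` {0..r} \<and>
     \<not> affine_dependent (rv ` \<alpha> ` {0..r}) \<and>
     (\<exists>!lam. (\<forall>j. j \<notin> {0..r} \<longrightarrow> lam j = 0) \<and>
          (\<forall>j\<in>{0..r}. lam j > (0::real)) \<and> (\<Sum>j\<in>{0..r}. lam j) = 1 \<and>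
          rv \<alpha>s = (\<Sum>j\<in>{0..r}. lam j *\<^sub>R rv (\<alpha> j)))"

end

theory Submission imports Defs begin

text \<open>Since \<open>\<alpha>\<^sup>\<star>\<close> lies in the convex hull of the simplex \<open>A = {\<alpha>(0), \<dots>, \<alpha>(r)}\<close>, the Newton
polytope \<open>New\<^sub>\<infinity>(f)\<close> is the convex hull of \<open>A \<union> {0}\<close>. By (C3) the \<open>n\<close> points \<open>2k\<^sub>ie\<^sub>i\<close> lie in
\<open>A\<close>, so \<open>r + 1 \<ge> n\<close>. A vertex \<open>\<alpha>(j)\<close> can never be gem degenerate: every face not containing 0
is spanned by vertices from \<open>A\<close>, and by affine independence \<open>\<alpha>(j)\<close> is not in the hull of the
others. If \<open>r = n\<close>, the simplex is full-dimensional and \<open>\<alpha>\<^sup>\<star>\<close>, having positive barycentric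
coordinates, is interior, hence in no proper face. If \<open>r = n - 1\<close>, \<open>A\<close> consists exactly of
the points \<open>2k\<^sub>ie\<^sub>i\<close>, which span the hyperplane \<open>\<Sum>\<^sub>i x\<^sub>i/(2k\<^sub>i) = 1\<close>; it supports
\<open>New\<^sub>\<infinity>(f)\<close> in a face avoiding 0 and containing \<open>\<alpha>\<^sup>\<star>\<close>.\<close>

lemma inj_rv: "inj rv"
  by (auto intro!: injI simp: rv_def vec_eq_iff)

lemma rv_axis: "rv (axis i m) = axis i (real m)"
  by (simp add: rv_def axis_def vec_eq_iff)

lemma extreme_point_of_affine_independent_subset:
  fixes G :: "'a::euclidean_space set"
  assumes "compact G" "convex G" "{x. x extreme_point_of G} \<subseteq> A"
    and "\<not> affine_dependent A" "b \<in> A" "b \<in> G"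
  shows "b extreme_point_of G"
proof (rule ccontr)
  assume "\<not> b extreme_point_of G"
  with assms(3) have "{x. x extreme_point_of G} \<subseteq> A - {b}" by blast
  then have "G \<subseteq> convex hull (A - {b})"
    using Krein_Milman_Minkowski[OF assms(1,2)] hull_mono by blast
  then have "b \<in> affine hull (A - {b})"
    using \<open>b \<in> G\<close> convex_hull_subset_affine_hull by blast
  with assms(4,5) show False
    unfolding affine_dependent_def by blast
qed

lemma face_of_eq_if_meets_interior:
  fixes S :: "'a::real_normed_vector set"
  assumes "G face_of S" "x \<in> G" "x \<in> interior S"
  shows "G = S"
  using assms face_of_disjoint_rel_interior interior_subset_rel_interior by blast

lemma positive_combination_in_interior_convex_hull:
  fixes p :: "'i \<Rightarrow> 'a::euclidean_space"
  assumes "inj_on p I" "\<not> affine_dependent (p ` I)" "card I = DIM('a) + 1"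
    and "\<forall>j\<in>I. 0 < lam j" "sum lam I = 1"
  shows "(\<Sum>j\<in>I. lam j *\<^sub>R p j) \<in> interior (convex hull (p ` I))"
proof -
  define u where "u x = lam (inv_into I p x)" for x
  have u: "u (p j) = lam j" if "j \<in> I" for j
    using assms(1) that by (simp add: u_def)
  have "(\<forall>x\<in>p ` I. 0 < u x) \<and> sum u (p ` I) = 1
      \<and> (\<Sum>x\<in>p ` I. u x *\<^sub>R x) = (\<Sum>j\<in>I. lam j *\<^sub>R p j)"
    using assms(4,5) u by (simp add: sum.reindex[OF assms(1)])
  moreover have "card (p ` I) = DIM('a) + 1"
    using assms(1,3) by (simp add: card_image)
  ultimately show ?thesis
    unfolding interior_convex_hull_explicit_minimal[OF assms(2)] by auto
qed

lemma face_of_convex_hull_insert_0_hyperplane: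
  fixes a :: "'a::real_inner"
  assumes "S \<subseteq> {x. a \<bullet> x = 1}"
  shows "convex hull (insert 0 S) \<inter> {x. a \<bullet> x = 1} face_of convex hull (insert 0 S)"
proof (rule face_of_Int_supporting_hyperplane_le)
  have "insert 0 S \<subseteq> {x. a \<bullet> x \<le> 1}" using assms by auto
  then show "a \<bullet> x \<le> 1" if "x \<in> convex hull (insert 0 S)" for x
    using hull_minimal[of _ _ convex, OF _ convex_halfspace_le] that by blast
qed (rule convex_convex_hull)

lemma inj_axis_multiples:
  assumes "\<forall>i. k i \<ge> (1::nat)"
  shows "inj (\<lambda>i. axis i (2 * k i))"
proof (rule injI)
  fix i j assume "axis i (2 * k i) = axis j (2 * k j)"
  then show "i = j" using assms[rule_format, of i] by (auto simp: axis_eq_axis)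
qed

lemma circuit_poly_star_in_convex_hull:
  assumes "circuit_poly f r \<alpha> \<alpha>s"
  shows "rv \<alpha>s \<in> convex hull (rv ` \<alpha> ` {0..r})" and "rv \<alpha>s \<notin> rv ` \<alpha> ` {0..r}"
proof -
  obtain lam where "\<forall>j\<in>{0..r}. lam j > (0::real)" "(\<Sum>j\<in>{0..r}. lam j) = 1"
    and star: "rv \<alpha>s = (\<Sum>j\<in>{0..r}. lam j *\<^sub>R rv (\<alpha> j))"
    using assms unfolding circuit_poly_def by auto
  then show "rv \<alpha>s \<in> convex hull (rv ` \<alpha> ` {0..r})"
    unfolding star by (intro convex_sum) (auto intro: hull_inc less_imp_le)
  show "rv \<alpha>s \<notin> rv ` \<alpha> ` {0..r}"
    using assms inj_rv unfolding circuit_poly_def by (auto dest: injD)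
qed

lemma circuit_poly_New_inf:
  assumes "circuit_poly f r \<alpha> \<alpha>s"
  shows "New_inf f = convex hull (insert 0 (rv ` \<alpha> ` {0..r}))"
proof -
  have "rv \<alpha>s \<in> convex hull (insert 0 (rv ` \<alpha> ` {0..r}))"
    using circuit_poly_star_in_convex_hull(1)[OF assms] hull_mono[of _ "insert 0 _"] by blast
  moreover have "supp_A f = insert \<alpha>s (\<alpha> ` {0..r})"
    using assms unfolding circuit_poly_def by auto
  ultimately show ?thesis
    unfolding New_inf_def by (simp add: insert_commute[of 0] hull_redundant)
qed

lemma circuit_poly_Vf_subset:
  assumes "circuit_poly f r \<alpha> \<alpha>s"
  shows "Vf f \<subseteq> rv ` \<alpha> ` {0..r}"
  using extreme_point_of_convex_hull
  unfolding Vf_def V0_def vertices_def circuit_poly_New_inf[OF assms] by fastforce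

lemma circuit_poly_star_in_Vc:
  assumes "circuit_poly f r \<alpha> \<alpha>s"
  shows "\<alpha>s \<in> Vc f"
  using assms circuit_poly_Vf_subset[OF assms] circuit_poly_star_in_convex_hull(2)[OF assms]
  unfolding Vc_def circuit_poly_def by auto

lemma circuit_poly_gem_degenerate_subset:
  assumes "circuit_poly f r \<alpha> \<alpha>s"
  shows "gem_degenerate_set f \<subseteq> {\<alpha>s}"
proof
  fix \<beta> assume \<beta>: "\<beta> \<in> gem_degenerate_set f"
  define N where "N = convex hull (insert 0 (rv ` \<alpha> ` {0..r}))"
  obtain G where G: "G face_of N" "0 \<notin> G" "rv \<beta> \<in> G"
    using \<beta> unfolding gem_degenerate_set_def GG_def circuit_poly_New_inf[OF assms] N_def by auto
  have "compact N" "convex N"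
    unfolding N_def by (auto intro: finite_imp_compact_convex_hull)
  then have "compact G" "convex G"
    using G(1) face_of_imp_compact face_of_imp_convex by auto
  have "{x. x extreme_point_of G} \<subseteq> rv ` \<alpha> ` {0..r}"
  proof
    fix x assume "x \<in> {x. x extreme_point_of G}"
    then have "x extreme_point_of N" "x \<noteq> 0"
      using extreme_point_of_face[OF G(1)] G(2) by auto
    then show "x \<in> rv ` \<alpha> ` {0..r}"
      unfolding N_def using extreme_point_of_convex_hull by fastforce
  qed
  moreover have "\<not> affine_dependent (rv ` \<alpha> ` {0..r})" and supp: "supp_A f = insert \<alpha>s (\<alpha> ` {0..r})"
    using assms unfolding circuit_poly_def by auto
  ultimately have "rv \<beta> extreme_point_of G" if "rv \<beta> \<in> rv ` \<alpha> ` {0..r}"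
    using extreme_point_of_affine_independent_subset[OF \<open>compact G\<close> \<open>convex G\<close>] that G(3)
    by blast
  then have "rv \<beta> extreme_point_of N" if "rv \<beta> \<in> rv ` \<alpha> ` {0..r}"
    using extreme_point_of_face[OF G(1)] that by blast
  moreover have "rv \<beta> \<notin> Vf f" "\<beta> \<in> supp_A f"
    using \<beta> unfolding gem_degenerate_set_def Vc_def by auto
  moreover have "rv \<beta> \<noteq> 0" using G by auto
  ultimately show "\<beta> \<in> {\<alpha>s}"
    unfolding Vf_def V0_def vertices_def circuit_poly_New_inf[OF assms] N_def[symmetric] supp
    by auto
qed

lemma circuit_poly_star_not_gem_degenerate:
  fixes f :: "nat ^ 'n \<Rightarrow> real"
  assumes "circuit_poly f r \<alpha> \<alpha>s" "r = CARD('n)"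
  shows "\<alpha>s \<notin> gem_degenerate_set f"
proof
  assume "\<alpha>s \<in> gem_degenerate_set f"
  then obtain G where G: "G face_of New_inf f" "0 \<notin> G" "rv \<alpha>s \<in> G"
    unfolding gem_degenerate_set_def GG_def by auto
  obtain lam where "\<forall>j\<in>{0..r}. lam j > (0::real)" "(\<Sum>j\<in>{0..r}. lam j) = 1"
    and star: "rv \<alpha>s = (\<Sum>j\<in>{0..r}. lam j *\<^sub>R rv (\<alpha> j))"
    and "inj_on \<alpha> {0..r}" "\<not> affine_dependent ((rv \<circ> \<alpha>) ` {0..r})"
    using assms(1) unfolding circuit_poly_def by (auto simp: image_comp)
  moreover have "inj_on (rv \<circ> \<alpha>) {0..r}"
    using \<open>inj_on \<alpha> {0..r}\<close> inj_rv by (auto intro: comp_inj_on inj_on_subset)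
  ultimately have "rv \<alpha>s \<in> interior (convex hull ((rv \<circ> \<alpha>) ` {0..r}))"
    unfolding star using positive_combination_in_interior_convex_hull[of "rv \<circ> \<alpha>" "{0..r}"]
      assms(2) by simp
  then have "rv \<alpha>s \<in> interior (New_inf f)"
    unfolding circuit_poly_New_inf[OF assms(1)] image_comp[symmetric]
    using interior_mono[OF hull_mono[OF subset_insertI]] by blast
  then have "G = New_inf f"
    using face_of_eq_if_meets_interior G by blast
  moreover have "0 \<in> New_inf f"
    unfolding New_inf_def by (simp add: hull_inc)
  ultimately show False using G(2) by blast
qed

lemma circuit_poly_star_gem_degenerate_if_axes:
  fixes f :: "nat ^ 'n \<Rightarrow> real" and k :: "'n \<Rightarrow> nat"
  assumes "circuit_poly f r \<alpha> \<alpha>s" "\<forall>i. k i \<ge> 1"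
    and axes: "\<alpha> ` {0..r} = range (\<lambda>i. axis i (2 * k i))"
  shows "\<alpha>s \<in> gem_degenerate_set f"
proof -
  define A where "A = rv ` \<alpha> ` {0..r}"
  define a :: "real ^ 'n" where "a = (\<chi> i. 1 / real (2 * k i))"
  have A: "A \<subseteq> {x. a \<bullet> x = 1}"
    using assms(2) unfolding A_def axes a_def by (auto simp: rv_axis inner_axis Suc_le_eq)
  define G where "G = New_inf f \<inter> {x. a \<bullet> x = 1}"
  have "G face_of New_inf f"
    unfolding G_def circuit_poly_New_inf[OF assms(1)] A_def[symmetric]
    using A by (rule face_of_convex_hull_insert_0_hyperplane)
  moreover have "rv \<alpha>s \<in> G"
  proof -
    have "rv \<alpha>s \<in> convex hull A"
      unfolding A_def by (rule circuit_poly_star_in_convex_hull(1)[OF assms(1)])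
    moreover have "convex hull A \<subseteq> {x. a \<bullet> x = 1}"
      using A by (rule hull_minimal) (rule convex_hyperplane)
    moreover have "convex hull A \<subseteq> New_inf f"
      unfolding circuit_poly_New_inf[OF assms(1)] A_def by (rule hull_mono) blast
    ultimately show ?thesis unfolding G_def by blast
  qed
  moreover have "0 \<notin> G" unfolding G_def by simp
  ultimately show ?thesis
    using circuit_poly_star_in_Vc[OF assms(1)]
    unfolding gem_degenerate_set_def GG_def Vc_def by blast
qed

lemma circuit_poly_C3_axes:
  assumes "circuit_poly f r \<alpha> \<alpha>s" "C3 f"
  obtains k where "\<forall>i. k i \<ge> (1::nat)" "range (\<lambda>i. axis i (2 * k i)) \<subseteq> \<alpha> ` {0..r}"
proof -
  obtain k where k: "\<And>i. k i \<ge> 1 \<and> rv (axis i (2 * k i)) \<in> Vf f"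
    using assms(2) unfolding C3_def by metis
  then have "rv (axis i (2 * k i)) \<in> rv ` \<alpha> ` {0..r}" for i
    using circuit_poly_Vf_subset[OF assms(1)] by blast
  then have "range (\<lambda>i. axis i (2 * k i)) \<subseteq> \<alpha> ` {0..r}"
    using inj_image_mem_iff[OF inj_rv] by blast
  with k that show ?thesis by blast
qed

theorem mainTheorem5:
  fixes f :: "nat ^ 'n \<Rightarrow> real" and r :: nat
    and \<alpha> :: "nat \<Rightarrow> nat ^ 'n" and \<alpha>s :: "nat ^ 'n"
  assumes "circuit_poly f r \<alpha> \<alpha>s" and "C3 f"
  shows "r \<in> {CARD('n) - 1, CARD('n)}
    \<and> (r = CARD('n) \<longrightarrow> gem_regular f)
    \<and> (r = CARD('n) - 1 \<longrightarrow>
         \<not> gem_regular f \<and> gem_degenerate_set f = {\<alpha>s} \<and>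
         (\<exists>k :: 'n \<Rightarrow> nat. (\<forall>i. k i \<ge> 1) \<and>
            \<alpha> ` {0..r} = range (\<lambda>i. axis i (2 * k i))))"
proof -
  obtain k where k: "\<forall>i. k i \<ge> 1" and axes: "range (\<lambda>i. axis i (2 * k i)) \<subseteq> \<alpha> ` {0..r}"
    using circuit_poly_C3_axes[OF assms] .
  have card_axes: "card (range (\<lambda>i. axis i (2 * k i))) = CARD('n)"
    using card_image[OF inj_axis_multiples[OF k]] by simp
  have card_vertices: "card (\<alpha> ` {0..r}) \<le> r + 1"
    using card_image_le[of "{0..r}" \<alpha>] by simp
  have "CARD('n) \<le> card (\<alpha> ` {0..r})"
    using card_mono[OF _ axes] card_axes by simp
  moreover have "r \<le> CARD('n)"
    using assms(1) unfolding circuit_poly_def by blast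
  moreover have "gem_regular f" if "r = CARD('n)"
    using circuit_poly_gem_degenerate_subset[OF assms(1)]
      circuit_poly_star_not_gem_degenerate[OF assms(1) that]
    unfolding gem_regular_def by blast
  moreover have "\<alpha> ` {0..r} = range (\<lambda>i. axis i (2 * k i))" if "r = CARD('n) - 1"
    using card_seteq[OF _ axes] card_vertices card_axes that by simp
  moreover have "gem_degenerate_set f = {\<alpha>s}" if "\<alpha> ` {0..r} = range (\<lambda>i. axis i (2 * k i))"
    using circuit_poly_gem_degenerate_subset[OF assms(1)]
      circuit_poly_star_gem_degenerate_if_axes[OF assms(1) k that] by blast
  ultimately show ?thesis
    using k card_vertices unfolding gem_regular_def by auto
qed

end
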